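(* Let $f:(0,\infty)\to(0,\infty)$ be a strictly decreasing continuous bijection of $(0,\infty)$ onto $(0,\infty)$ (as is the case under (A)). Let $F:(0,\infty)\to(0,\infty)$ be a function that is continuous and strictly decreasing on some interval $[r_1,\infty)$, and suppose there exist $r_0>0$ and $0<a<2$ with $$f^2(r)\le F(r)\le f^a(r),\qquad r>r_0.$$ Let $\kappa,\widetilde\kappa>0$, let $\alpha(u)=(f^2)^{-1}(\kappa/u)$ and $\tau(u)=F^{-1}(\widetilde\kappa/u)$ for $u$ large enough (where $F^{-1}$ is the inverse of $F$ restricted to $[r_1,\infty)$). Let $m:(0,\infty)\to(0,\infty)$ be eventually increasing and let $\omega\ge0$ be such that for every $c>0$ and $\lambda\ge1$, $$\limsup_{s\to0^+}\frac{m\big(f^{-1}(cs^\lambda)\big)}{m\big(f^{-1}(s)\big)}\le\lambda^\omega. \qquad (\ast)$$ Then $$1\le\liminf_{u\to\infty}\frac{m(\tau(u))}{m(\alpha(u))}\le\limsup_{u\to\infty}\frac{m(\tau(u))}{m(\alpha(u))}\le\Big(\frac2a\Big)^{\omega}.$$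
   Context: Assumption (A) (for reference) in particular provides a strictly decreasing continuous profile $f:(0,\infty)\to(0,\infty)$ of a Lévy density with infinite total mass, which is a bijection of $(0,\infty)$ onto itself; $f^{-1}$ and $(f^2)^{-1}$ denote the inverses of $f$ and $f^2$. *)

theory Defs
  imports "HOL-Analysis.Analysis" "HOL-Library.Extended_Real" "HOL-Library.Liminf_Limsup"
begin

end

theory Submission
  imports Defs
begin

(*
  With s = sqrt (kappa / u) we have alpha u = f^-1 s, while tau u solves F (tau u) = kappa' / u and
  tends to infinity. Applying the decreasing map f^-1 to f^2 <= F <= f^a at tau u traps tau u between
  f^-1 (c1 s) and f^-1 (c2 s^(2/a)), with c1 = sqrt (kappa' / kappa) and c2 = (kappa' / kappa)^(1/a).
  As m is eventually increasing, m (tau u) / m (alpha u) is trapped between the corresponding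
  quotients of m-values. Hypothesis star with lambda = 2/a bounds the limsup of the upper quotient by
  (2/a)^omega; star with c = 1/c1 and lambda = 1 says that the reciprocal of the lower
  quotient has limsup at most 1, so its liminf is at least 1.
*)

lemma Limsup_le_via_filterlim:
  fixes g :: "'a \<Rightarrow> 'c::complete_linorder"
  assumes s: "filterlim s G F"
    and le: "\<forall>\<^sub>F x in F. g x \<le> h (s x)"
    and L: "Limsup G h \<le> L"
  shows "Limsup F g \<le> L"
proof -
  have "Limsup F g \<le> Limsup F (\<lambda>x. h (s x))"
    using le by (rule Limsup_mono)
  also have "\<dots> \<le> Limsup (filtermap s F) h"
    by (rule Limsup_filtermap_ge)
  also have "\<dots> \<le> Limsup G h"
    using s unfolding Limsup_def filterlim_def le_filter_def
    by (auto intro!: INF_superset_mono)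
  finally show ?thesis
    using L by (rule order_trans)
qed

lemma one_le_Liminf_if_Limsup_inverse_le_one:
  fixes g :: "'a \<Rightarrow> real"
  assumes pos: "\<forall>\<^sub>F x in F. 0 < g x"
    and le: "Limsup F (\<lambda>x. ereal (1 / g x)) \<le> 1"
  shows "1 \<le> Liminf F (\<lambda>x. ereal (g x))"
proof (cases "F = bot")
  case False
  have "Liminf F (\<lambda>x. ereal (g x)) = Liminf F (\<lambda>x. inverse (ereal (1 / g x)))"
    using pos by (auto intro!: Liminf_eq elim!: eventually_mono)
  also have "\<dots> = inverse (Limsup F (\<lambda>x. ereal (1 / g x)))"
    using False pos by (intro Liminf_inverse_ereal) (auto elim!: eventually_mono)
  also have "\<dots> \<ge> 1"
  proof -
    have "0 \<le> Limsup F (\<lambda>x. ereal (1 / g x))"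
      using False pos by (intro le_Limsup) (auto elim!: eventually_mono)
    then show ?thesis
      using ereal_inverse_antimono[OF _ le] by simp
  qed
  finally show ?thesis .
qed simp

lemma filterlim_at_right_0_const_mult:
  fixes s :: "'a \<Rightarrow> real"
  assumes s: "filterlim s (at_right 0) G" and c: "0 < c"
  shows "filterlim (\<lambda>x. c * s x) (at_right 0) G"
  using s c unfolding filterlim_at
  by (auto intro: tendsto_mult_right_zero elim!: eventually_mono)

lemma filterlim_at_right_0_sqrt:
  fixes s :: "'a \<Rightarrow> real"
  assumes s: "filterlim s (at_right 0) G"
  shows "filterlim (\<lambda>x. sqrt (s x)) (at_right 0) G"
  using s unfolding filterlim_at
  by (auto dest: tendsto_real_sqrt elim!: eventually_mono)

lemma filterlim_const_divide_at_top_at_right_0: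
  fixes c :: real
  assumes "0 < c"
  shows "filterlim (\<lambda>u. c / u) (at_right 0) at_top"
  using filterlim_at_right_0_const_mult[OF filterlim_inverse_at_right_top assms]
  by (simp add: divide_inverse)

lemma strict_antimono_continuous_inv_into:
  fixes F :: "real \<Rightarrow> real"
  assumes cont: "continuous_on {b..} F" and dec: "strict_antimono_on {b..} F"
    and lim: "(F \<longlongrightarrow> 0) at_top"
    and c: "b \<le> c" and y: "0 < y" "y \<le> F c"
  shows "F (inv_into {b..} F y) = y \<and> c \<le> inv_into {b..} F y"
proof -
  obtain r where r: "c \<le> r" "F r < y"
    using eventually_happens'[OF _ eventually_conj[OF eventually_ge_at_top
        order_tendstoD(2)[OF lim y(1)]]]
    by auto
  then obtain x where "c \<le> x" "x \<le> r" "F x = y"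
    using IVT2'[of F r y c] y continuous_on_subset[OF cont] c by fastforce
  then have "y \<in> F ` {b..}"
    using c by force
  then have F_inv: "F (inv_into {b..} F y) = y" and inv_ge: "inv_into {b..} F y \<in> {b..}"
    by (rule f_inv_into_f, rule inv_into_into)
  have "c \<le> inv_into {b..} F y"
  proof (rule ccontr)
    assume "\<not> c \<le> inv_into {b..} F y"
    then have "F c < y"
      using monotone_onD[OF dec _ _] inv_ge c F_inv by force
    then show False
      using y by simp
  qed
  with F_inv show ?thesis ..
qed

locale pos_decreasing_bij =
  fixes f :: "real \<Rightarrow> real"
  assumes antimono: "strict_antimono_on {0<..} f"
    and bij: "bij_betw f {0<..} {0<..}"
begin

abbreviation finv :: "real \<Rightarrow> real"
  where "finv \<equiv> inv_into {0<..} f"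

lemma f_pos: "0 < x \<Longrightarrow> 0 < f x"
  using bij_betw_apply[OF bij] by auto

lemma finv_pos: "0 < y \<Longrightarrow> 0 < finv y"
  using inv_into_into[of y f "{0<..}"] bij_betw_imp_surj_on[OF bij] by auto

lemma f_finv: "0 < y \<Longrightarrow> f (finv y) = y"
  using f_inv_into_f[of y f "{0<..}"] bij_betw_imp_surj_on[OF bij] by auto

lemma finv_le: "0 < x \<Longrightarrow> 0 < y \<Longrightarrow> f x \<le> y \<Longrightarrow> finv y \<le> x"
  using monotone_onD[OF antimono, of x "finv y"] finv_pos f_finv by force

lemma le_finv: "0 < x \<Longrightarrow> 0 < y \<Longrightarrow> y \<le> f x \<Longrightarrow> x \<le> finv y"
  using monotone_onD[OF antimono, of "finv y" x] finv_pos f_finv by force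

lemma tendsto_f_at_top: "(f \<longlongrightarrow> 0) at_top"
proof (rule order_tendstoI)
  fix e :: real
  assume e: "0 < e"
  show "\<forall>\<^sub>F x in at_top. f x < e"
    using eventually_gt_at_top[of "finv e"]
  proof eventually_elim
    case (elim x)
    then show ?case
      using monotone_onD[OF antimono, of "finv e" x] e finv_pos f_finv by force
  qed
qed (auto intro: eventually_mono[OF eventually_gt_at_top[of 0]] f_pos order.strict_trans)

lemma filterlim_finv_at_right_0: "filterlim finv at_top (at_right 0)"
  unfolding filterlim_at_top_gt[where c = 0] eventually_at_right_field
  by (metis f_pos le_finv less_le)

lemma finv_sqrt_le_le_finv_powr:
  assumes x: "0 < x" and a: "0 < a" and y: "0 < y"
    and bounds: "f x ^ 2 \<le> y" "y \<le> f x powr a"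
  shows "finv (sqrt y) \<le> x \<and> x \<le> finv (y powr (1 / a))"
proof
  show "finv (sqrt y) \<le> x"
    using finv_le x y bounds(1) real_le_rsqrt by simp
  have "y powr (1 / a) \<le> (f x powr a) powr (1 / a)"
    using bounds(2) y a by (simp add: powr_mono2)
  also have "\<dots> = f x"
    using f_pos[OF x] a by (simp add: powr_powr)
  finally show "x \<le> finv (y powr (1 / a))"
    using le_finv x y by simp
qed

lemma inv_into_square: "0 < y \<Longrightarrow> inv_into {0<..} (\<lambda>r. f r ^ 2) y = finv (sqrt y)"
proof (rule inv_into_f_eq)
  show "inj_on (\<lambda>r. f r ^ 2) {0<..}"
    using f_pos bij_betw_imp_inj_on[OF bij]
    by (auto intro!: inj_onI dest: inj_onD simp: power2_eq_iff_nonneg less_imp_le)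
qed (auto simp: finv_pos f_finv)

lemma eventually_inv_into_between:
  fixes F :: "real \<Rightarrow> real"
  assumes cont: "continuous_on {r1..} F" and dec: "strict_antimono_on {r1..} F"
    and bounds: "\<forall>r>r0. f r ^ 2 \<le> F r \<and> F r \<le> f r powr a" and a: "0 < a"
  shows "\<forall>\<^sub>F y in at_right 0.
    finv (sqrt y) \<le> inv_into {r1..} F y \<and> inv_into {r1..} F y \<le> finv (y powr (1 / a))"
proof -
  define c where "c = max 1 (max r1 (r0 + 1))"
  have F_nonneg: "\<forall>\<^sub>F r in at_top. 0 \<le> F r"
    using eventually_gt_at_top[of r0] by eventually_elim (metis bounds order.trans zero_le_power2)
  have F_le: "\<forall>\<^sub>F r in at_top. F r \<le> f r powr a"
    using eventually_gt_at_top[of r0] by eventually_elim (use bounds in \<open>force\<close>)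
  have f_nonneg: "\<forall>\<^sub>F r in at_top. 0 \<le> f r"
    using eventually_gt_at_top[of 0] by eventually_elim (simp add: f_pos less_imp_le)
  have "((\<lambda>r. f r powr a) \<longlongrightarrow> 0) at_top"
    by (rule tendsto_zero_powrI[OF tendsto_f_at_top tendsto_const f_nonneg a])
  then have F_lim: "(F \<longlongrightarrow> 0) at_top"
    using F_nonneg F_le by (auto intro: tendsto_sandwich)
  have "r0 < c" "0 < c"
    unfolding c_def by auto
  then have Fc_pos: "0 < F c"
    using bounds f_pos[of c] by (auto intro: less_le_trans[OF zero_less_power])
  show ?thesis
    unfolding eventually_at_right_field
  proof (intro exI[of _ "F c"] conjI[OF Fc_pos] allI impI)
    fix y :: real
    assume y: "0 < y" "y < F c"
    define t where "t = inv_into {r1..} F y"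
    have "F t = y" and "c \<le> t"
      using strict_antimono_continuous_inv_into[OF cont dec F_lim, of c y] y
      unfolding c_def t_def by auto
    then have "0 < t" "f t ^ 2 \<le> y" "y \<le> f t powr a"
      using bounds[rule_format, of t] unfolding c_def by auto
    then have "finv (sqrt y) \<le> t \<and> t \<le> finv (y powr (1 / a))"
      using finv_sqrt_le_le_finv_powr a y by blast
    then show "finv (sqrt y) \<le> inv_into {r1..} F y
        \<and> inv_into {r1..} F y \<le> finv (y powr (1 / a))"
      unfolding t_def .
  qed
qed

lemma Limsup_ratio_le:
  fixes m :: "real \<Rightarrow> real" and s g :: "'a \<Rightarrow> real"
  assumes m_pos: "\<forall>r>0. 0 < m r" and m_mono: "mono_on {R..} m"
    and s: "filterlim s (at_right 0) G"
    and g: "\<forall>\<^sub>F x in G. R \<le> g x \<and> g x \<le> finv (c * s x powr l)"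
    and L: "Limsup (at_right 0) (\<lambda>t. ereal (m (finv (c * t powr l)) / m (finv t))) \<le> L"
  shows "Limsup G (\<lambda>x. ereal (m (g x) / m (finv (s x)))) \<le> L"
proof (rule Limsup_le_via_filterlim[OF s _ L])
  show "\<forall>\<^sub>F x in G.
    ereal (m (g x) / m (finv (s x))) \<le> ereal (m (finv (c * s x powr l)) / m (finv (s x)))"
    using g eventually_compose_filterlim[OF eventually_at_right_less s]
  proof eventually_elim
    case (elim x)
    have "m (g x) \<le> m (finv (c * s x powr l))"
      using mono_onD[OF m_mono] elim by auto
    moreover have "0 < m (finv (s x))"
      using m_pos finv_pos elim by simp
    ultimately show ?case
      by (simp add: divide_right_mono)
  qed
qed

lemma Liminf_ratio_ge:
  fixes m :: "real \<Rightarrow> real" and s g :: "'a \<Rightarrow> real"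
  assumes m_pos: "\<forall>r>0. 0 < m r" and m_mono: "mono_on {R..} m"
    and s: "filterlim s (at_right 0) G" and c: "0 < c"
    and g: "\<forall>\<^sub>F x in G. R \<le> finv (c * s x) \<and> finv (c * s x) \<le> g x"
    and one: "Limsup (at_right 0) (\<lambda>t. ereal (m (finv (t / c)) / m (finv t))) \<le> 1"
  shows "1 \<le> Liminf G (\<lambda>x. ereal (m (g x) / m (finv (s x))))"
proof (rule one_le_Liminf_if_Limsup_inverse_le_one)
  have pos: "\<forall>\<^sub>F x in G. 0 < s x \<and> 0 < g x"
    using g eventually_compose_filterlim[OF eventually_at_right_less s]
    by eventually_elim (metis c finv_pos mult_pos_pos less_le_trans)
  then show "\<forall>\<^sub>F x in G. 0 < m (g x) / m (finv (s x))"
    by eventually_elim (simp add: m_pos finv_pos)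
  show "Limsup G (\<lambda>x. ereal (1 / (m (g x) / m (finv (s x))))) \<le> 1"
  proof (rule Limsup_le_via_filterlim[OF filterlim_at_right_0_const_mult[OF s c] _ one])
    show "\<forall>\<^sub>F x in G.
      ereal (1 / (m (g x) / m (finv (s x)))) \<le> ereal (m (finv (c * s x / c)) / m (finv (c * s x)))"
      using g pos
    proof eventually_elim
      case (elim x)
      have "m (finv (c * s x)) \<le> m (g x)"
        using mono_onD[OF m_mono] elim by auto
      moreover have "0 < m (finv (s x))" "0 < m (finv (c * s x))"
        using m_pos finv_pos elim c by simp_all
      ultimately show ?case
        using c by (simp add: divide_left_mono)
    qed
  qed
qed

lemma ratio_Liminf_Limsup_bounds:
  fixes m :: "real \<Rightarrow> real" and s g :: "'a \<Rightarrow> real"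
  assumes m_pos: "\<forall>r>0. 0 < m r" and m_mono: "mono_on {R..} m"
    and star: "\<forall>c>0. \<forall>l\<ge>1.
      Limsup (at_right 0) (\<lambda>t. ereal (m (finv (c * t powr l)) / m (finv t))) \<le> ereal (l powr \<omega>)"
    and s: "filterlim s (at_right 0) G" and c1: "0 < c1" and c2: "0 < c2" and l: "1 \<le> l"
    and g: "\<forall>\<^sub>F x in G. finv (c1 * s x) \<le> g x \<and> g x \<le> finv (c2 * s x powr l)"
  shows "1 \<le> Liminf G (\<lambda>x. ereal (m (g x) / m (finv (s x))))
    \<and> Limsup G (\<lambda>x. ereal (m (g x) / m (finv (s x)))) \<le> ereal (l powr \<omega>)"
proof
  have "\<forall>\<^sub>F x in G. R \<le> finv (c1 * s x)"
    using filterlim_compose[OF filterlim_finv_at_right_0 filterlim_at_right_0_const_mult[OF s c1]]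
    unfolding filterlim_at_top by blast
  with g have lower_large: "\<forall>\<^sub>F x in G. R \<le> finv (c1 * s x) \<and> finv (c1 * s x) \<le> g x"
    and upper_large: "\<forall>\<^sub>F x in G. R \<le> g x \<and> g x \<le> finv (c2 * s x powr l)"
    by (eventually_elim, auto)+
  have "Limsup (at_right 0) (\<lambda>t. ereal (m (finv (1 / c1 * t powr 1)) / m (finv t)))
      \<le> ereal (1 powr \<omega>)"
    by (rule star[rule_format]) (use c1 in auto)
  moreover have "\<forall>\<^sub>F t in at_right 0. ereal (m (finv (1 / c1 * t powr 1)) / m (finv t))
      = ereal (m (finv (t / c1)) / m (finv t))"
    using eventually_at_right_less by eventually_elim simp
  ultimately have "Limsup (at_right 0) (\<lambda>t. ereal (m (finv (t / c1)) / m (finv t))) \<le> 1"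
    by (simp only: Limsup_eq powr_one_eq_one one_ereal_def)
  then show "1 \<le> Liminf G (\<lambda>x. ereal (m (g x) / m (finv (s x))))"
    by (rule Liminf_ratio_ge[OF m_pos m_mono s c1 lower_large])
  show "Limsup G (\<lambda>x. ereal (m (g x) / m (finv (s x)))) \<le> ereal (l powr \<omega>)"
    using star c2 l by (intro Limsup_ratio_le[OF m_pos m_mono s upper_large]) blast
qed

end

lemma sqrt_powr_rescale:
  fixes k k' u a :: real
  assumes "0 < k" "0 \<le> k'" "0 < u"
  shows "sqrt (k' / u) = sqrt (k' / k) * sqrt (k / u)"
    and "(k' / u) powr (1 / a) = (k' / k) powr (1 / a) * sqrt (k / u) powr (2 / a)"
proof -
  have split: "k' / u = k' / k * (k / u)"
    using assms by simp
  have "sqrt (k / u) powr (2 / a) = (k / u) powr (1 / a)"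
    using assms by (simp add: powr_half_sqrt[symmetric] powr_powr)
  then show "sqrt (k' / u) = sqrt (k' / k) * sqrt (k / u)"
    and "(k' / u) powr (1 / a) = (k' / k) powr (1 / a) * sqrt (k / u) powr (2 / a)"
    unfolding split real_sqrt_mult powr_mult by simp_all
qed

theorem lemma4p1:
  fixes f F m :: "real \<Rightarrow> real" and r0 r1 a \<kappa> \<kappa>' \<omega> :: real
  assumes f_cont: "continuous_on {0<..} f"
    and f_dec: "\<forall>x\<in>{0<..}. \<forall>y\<in>{0<..}. x < y \<longrightarrow> f y < f x"
    and f_bij: "bij_betw f {0<..} {0<..}"
    and F_pos: "\<forall>r>0. F r > 0"
    and r1: "r1 > 0"
    and F_cont: "continuous_on {r1..} F"
    and F_dec: "\<forall>x\<in>{r1..}. \<forall>y\<in>{r1..}. x < y \<longrightarrow> F y < F x"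
    and r0: "r0 > 0"
    and a: "0 < a" "a < 2"
    and F_bounds: "\<forall>r>r0. f r ^ 2 \<le> F r \<and> F r \<le> f r powr a"
    and kappa: "\<kappa> > 0" "\<kappa>' > 0"
    and m_pos: "\<forall>r>0. m r > 0"
    and m_mono: "\<exists>R. mono_on {R..} m"
    and omega: "\<omega> \<ge> 0"
    and star: "\<forall>c>0. \<forall>l\<ge>1.
        Limsup (at_right 0)
          (\<lambda>s. ereal (m (inv_into {0<..} f (c * s powr l)) / m (inv_into {0<..} f s)))
        \<le> ereal (l powr \<omega>)"
  defines "\<alpha> \<equiv> (\<lambda>u. inv_into {0<..} (\<lambda>r. f r ^ 2) (\<kappa> / u))"
    and "\<tau> \<equiv> (\<lambda>u. inv_into {r1..} F (\<kappa>' / u))"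
  shows "1 \<le> Liminf at_top (\<lambda>u. ereal (m (\<tau> u) / m (\<alpha> u)))
    \<and> Liminf at_top (\<lambda>u. ereal (m (\<tau> u) / m (\<alpha> u)))
        \<le> Limsup at_top (\<lambda>u. ereal (m (\<tau> u) / m (\<alpha> u)))
    \<and> Limsup at_top (\<lambda>u. ereal (m (\<tau> u) / m (\<alpha> u))) \<le> ereal ((2 / a) powr \<omega>)"
proof -
  interpret f: pos_decreasing_bij f
    using f_dec f_bij by unfold_locales (auto simp: monotone_on_def)
  have F_antimono: "strict_antimono_on {r1..} F"
    using F_dec by (auto simp: monotone_on_def)
  obtain R where m_mono_R: "mono_on {R..} m"
    using m_mono by blast
  define s where "s u = sqrt (\<kappa> / u)" for u
  define c1 where "c1 = sqrt (\<kappa>' / \<kappa>)"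
  define c2 where "c2 = (\<kappa>' / \<kappa>) powr (1 / a)"
  have s_lim: "filterlim s (at_right 0) at_top"
    unfolding s_def
    by (intro filterlim_at_right_0_sqrt filterlim_const_divide_at_top_at_right_0 kappa)
  have between: "\<forall>\<^sub>F u in at_top.
      f.finv (c1 * s u) \<le> \<tau> u \<and> \<tau> u \<le> f.finv (c2 * s u powr (2 / a))"
    using eventually_compose_filterlim[OF
        f.eventually_inv_into_between[OF F_cont F_antimono F_bounds a(1)]
        filterlim_const_divide_at_top_at_right_0[OF kappa(2)]]
      eventually_gt_at_top[of 0]
  proof eventually_elim
    case (elim u)
    then show ?case
      using sqrt_powr_rescale(1)[of \<kappa> \<kappa>' u] sqrt_powr_rescale(2)[of \<kappa> \<kappa>' u a] kappa
      unfolding \<tau>_def c1_def c2_def s_def by simp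
  qed
  have "0 < c1" "0 < c2" "1 \<le> 2 / a"
    using kappa a unfolding c1_def c2_def by simp_all
  note bounds = f.ratio_Liminf_Limsup_bounds[OF m_pos m_mono_R star s_lim this between]
  have ratio_eq: "\<forall>\<^sub>F u in at_top.
      ereal (m (\<tau> u) / m (\<alpha> u)) = ereal (m (\<tau> u) / m (f.finv (s u)))"
    using eventually_gt_at_top[of 0]
    by eventually_elim (simp add: \<alpha>_def s_def kappa f.inv_into_square)
  show ?thesis
    unfolding Liminf_eq[OF ratio_eq] Limsup_eq[OF ratio_eq]
    using bounds by (simp add: Liminf_le_Limsup)
qed

end
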